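(* Let $\mathcal{A}$ be a unital involutive algebra, $\sigma$ an automorphism of $\mathcal{A}$, and let $(\mathcal{A},\mathcal{H},D)$ be a $\sigma$-spectral triple. Let $h=h^*\in\mathcal{A}$ be such that $e^{h},e^{-h}\in\mathcal{A}$. Then the perturbed triple $(\mathcal{A},\mathcal{H},D')$ with $D'=e^{h}De^{h}$ is a $\sigma'$-spectral triple, where $\sigma'\in \mathrm{Aut}(\mathcal{A})$ is given by \[\sigma'(a)=e^{h}\,\sigma(e^{h}ae^{-h})\,e^{-h},\qquad a\in\mathcal{A}.\]
   Context: A $\sigma$-spectral triple (twisted spectral triple) $(\mathcal{A},\mathcal{H},D)$ consists of an algebra $\mathcal{A}$ represented by bounded operators on a Hilbert space $\mathcal{H}$, an unbounded selfadjoint operator $D$ on $\mathcal{H}$ with compact resolvent, and an automorphism $\sigma$ of $\mathcal{A}$ such that for every $a\in\mathcal{A}$ the twisted commutator $[D,a]_\sigma:=Da-\sigma(a)D$ is defined on the domain of $D$ and extends to a bounded operator on $\mathcal{H}$. The exponentials $e^{\pm h}$ are computed in the (involutive) representation. *)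

theory Defs
  imports "HOL-Analysis.Analysis"
begin

text \<open>A complex Hilbert space is modelled on a real Banach space type 'h together with
  a real-linear map J (multiplication by the imaginary unit) and a complex-valued
  inner product ip, linear in the first argument, conjugate symmetric, compatible
  with J, and inducing the given norm.\<close>

definition cscale :: "('h::real_normed_vector \<Rightarrow> 'h) \<Rightarrow> complex \<Rightarrow> 'h \<Rightarrow> 'h" where
  "cscale J c x = Re c *\<^sub>R x + Im c *\<^sub>R J x"

definition complex_hilbert ::
  "('h::banach \<Rightarrow> 'h) \<Rightarrow> ('h \<Rightarrow> 'h \<Rightarrow> complex) \<Rightarrow> bool" where
  "complex_hilbert J ip \<longleftrightarrow>
     linear J \<and> (\<forall>x. J (J x) = - x) \<and>
     (\<forall>x y z. ip (x + y) z = ip x z + ip y z) \<and>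
     (\<forall>r x y. ip (r *\<^sub>R x) y = complex_of_real r * ip x y) \<and>
     (\<forall>x y. ip (J x) y = \<i> * ip x y) \<and>
     (\<forall>x y. ip y x = cnj (ip x y)) \<and>
     (\<forall>x. ip x x = complex_of_real ((norm x)\<^sup>2))"

definition bounded_op :: "('h::real_normed_vector \<Rightarrow> 'h) \<Rightarrow> ('h \<Rightarrow> 'h) \<Rightarrow> bool" where
  "bounded_op J T \<longleftrightarrow> bounded_linear T \<and> (\<forall>x. T (J x) = J (T x))"

definition is_adjoint :: "('h \<Rightarrow> 'h \<Rightarrow> complex) \<Rightarrow> ('h \<Rightarrow> 'h) \<Rightarrow> ('h \<Rightarrow> 'h) \<Rightarrow> bool" where
  "is_adjoint ip T S \<longleftrightarrow> (\<forall>x y. ip (T x) y = ip x (S y))"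

definition op_exp :: "('h::real_normed_vector \<Rightarrow> 'h) \<Rightarrow> 'h \<Rightarrow> 'h" where
  "op_exp T x = (\<Sum>n. (1 / fact n) *\<^sub>R (T ^^ n) x)"

definition unital_star_op_algebra ::
  "('h::banach \<Rightarrow> 'h) \<Rightarrow> ('h \<Rightarrow> 'h \<Rightarrow> complex) \<Rightarrow> ('h \<Rightarrow> 'h) set \<Rightarrow> bool" where
  "unital_star_op_algebra J ip A \<longleftrightarrow>
     (\<forall>T\<in>A. bounded_op J T) \<and>
     id \<in> A \<and>
     (\<forall>S\<in>A. \<forall>T\<in>A. (\<lambda>x. S x + T x) \<in> A) \<and>
     (\<forall>S\<in>A. \<forall>T\<in>A. S \<circ> T \<in> A) \<and>
     (\<forall>c. \<forall>T\<in>A. (\<lambda>x. cscale J c (T x)) \<in> A) \<and>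
     (\<forall>T\<in>A. \<exists>S\<in>A. is_adjoint ip T S)"

definition op_algebra_aut ::
  "('h::real_normed_vector \<Rightarrow> 'h) \<Rightarrow> ('h \<Rightarrow> 'h) set \<Rightarrow> (('h \<Rightarrow> 'h) \<Rightarrow> ('h \<Rightarrow> 'h)) \<Rightarrow> bool" where
  "op_algebra_aut J A \<sigma> \<longleftrightarrow>
     bij_betw \<sigma> A A \<and>
     \<sigma> id = id \<and>
     (\<forall>S\<in>A. \<forall>T\<in>A. \<sigma> (\<lambda>x. S x + T x) = (\<lambda>x. \<sigma> S x + \<sigma> T x)) \<and>
     (\<forall>S\<in>A. \<forall>T\<in>A. \<sigma> (S \<circ> T) = \<sigma> S \<circ> \<sigma> T) \<and>
     (\<forall>c. \<forall>T\<in>A. \<sigma> (\<lambda>x. cscale J c (T x)) = (\<lambda>x. cscale J c (\<sigma> T x)))"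

text \<open>An (unbounded) operator is a pair (domain Dom, map D); only the values on Dom matter.\<close>

definition selfadjoint_op ::
  "('h::banach \<Rightarrow> 'h) \<Rightarrow> ('h \<Rightarrow> 'h \<Rightarrow> complex) \<Rightarrow> 'h set \<Rightarrow> ('h \<Rightarrow> 'h) \<Rightarrow> bool" where
  "selfadjoint_op J ip Dom D \<longleftrightarrow>
     0 \<in> Dom \<and>
     (\<forall>x\<in>Dom. \<forall>y\<in>Dom. x + y \<in> Dom \<and> D (x + y) = D x + D y) \<and>
     (\<forall>c. \<forall>x\<in>Dom. cscale J c x \<in> Dom \<and> D (cscale J c x) = cscale J c (D x)) \<and>
     closure Dom = UNIV \<and>
     \<comment> \<open>Dom(D*) = Dom(D)\<close>
     (\<forall>y. y \<in> Dom \<longleftrightarrow> (\<exists>z. \<forall>x\<in>Dom. ip (D x) y = ip x z)) \<and>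
     \<comment> \<open>D* = D on the common domain\<close>
     (\<forall>x\<in>Dom. \<forall>y\<in>Dom. ip (D x) y = ip x (D y))"

definition compact_op :: "('h::real_normed_vector \<Rightarrow> 'h) \<Rightarrow> bool" where
  "compact_op R \<longleftrightarrow> bounded_linear R \<and> compact (closure (R ` cball 0 1))"

definition compact_resolvent ::
  "('h::real_normed_vector \<Rightarrow> 'h) \<Rightarrow> 'h set \<Rightarrow> ('h \<Rightarrow> 'h) \<Rightarrow> bool" where
  "compact_resolvent J Dom D \<longleftrightarrow>
     (\<exists>mu::complex. \<exists>R.
        (\<forall>y. R y \<in> Dom \<and> D (R y) - cscale J mu (R y) = y) \<and>
        (\<forall>x\<in>Dom. R (D x - cscale J mu x) = x) \<and>
        compact_op R)"

definition sigma_spectral_triple ::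
  "('h::banach \<Rightarrow> 'h) \<Rightarrow> ('h \<Rightarrow> 'h \<Rightarrow> complex) \<Rightarrow> ('h \<Rightarrow> 'h) set \<Rightarrow>
   (('h \<Rightarrow> 'h) \<Rightarrow> ('h \<Rightarrow> 'h)) \<Rightarrow> 'h set \<Rightarrow> ('h \<Rightarrow> 'h) \<Rightarrow> bool" where
  "sigma_spectral_triple J ip A \<sigma> Dom D \<longleftrightarrow>
     complex_hilbert J ip \<and>
     unital_star_op_algebra J ip A \<and>
     op_algebra_aut J A \<sigma> \<and>
     selfadjoint_op J ip Dom D \<and>
     compact_resolvent J Dom D \<and>
     (\<forall>a\<in>A. (\<forall>x\<in>Dom. a x \<in> Dom) \<and>
        (\<exists>B. bounded_linear B \<and> (\<forall>x\<in>Dom. D (a x) - \<sigma> a (D x) = B x)))"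

end

theory Submission
  imports Defs
begin

text \<open>Since e^h and e^{-h} are mutually inverse (exponential law for the commuting operators
  h and -h) and e^h is selfadjoint, conjugation by e^h is an inner automorphism of the algebra and
  D' = e^h D e^h, with domain e^{-h}(Dom D), is again selfadjoint; its twisted commutators are
  [D', a]_\<sigma>' = e^h [D, e^h a e^{-h}]_\<sigma> e^h.  For the compact resolvent, selfadjointness makes
  D' - i invertible (its range is closed and has trivial orthogonal complement), and applying e^{-h}
  to (D' - i) x = y expresses (D' - i)^{-1} as e^{-h} (D - \<mu>)^{-1} G with G bounded.\<close>

section \<open>Exponential of a bounded operator\<close>

lemma funpow_norm_le:
  fixes h :: "'a::real_normed_vector \<Rightarrow> 'a"
  assumes "\<And>x. norm (h x) \<le> norm x * K" and "0 \<le> K"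
  shows "norm ((h ^^ n) x) \<le> K ^ n * norm x"
proof (induction n)
  case (Suc n)
  have "norm ((h ^^ Suc n) x) \<le> norm ((h ^^ n) x) * K" using assms(1) by simp
  also have "\<dots> \<le> K ^ n * norm x * K" using Suc assms(2) by (intro mult_right_mono)
  finally show ?case by (simp add: algebra_simps)
qed simp

lemma bounded_linear_funpow:
  "bounded_linear (h::'a::real_normed_vector \<Rightarrow> 'a) \<Longrightarrow> bounded_linear (h ^^ n)"
  by (induction n) (auto intro: bounded_linear_compose bounded_linear_ident simp: id_def o_def)

lemma funpow_scaleR:
  fixes h :: "'a::real_vector \<Rightarrow> 'a"
  assumes "linear h"
  shows "((\<lambda>x. t *\<^sub>R h x) ^^ n) x = t ^ n *\<^sub>R (h ^^ n) x"
  by (induction n) (simp_all add: linear_scale[OF assms])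

lemma exp_has_sum: "((\<lambda>n. r ^ n / fact n) has_sum exp (r::real)) UNIV"
proof (rule norm_summable_imp_has_sum)
  show "(\<lambda>n. r ^ n / fact n) sums exp r"
    using exp_converges[of r] by (simp add: divide_inverse mult.commute)
  show "summable (\<lambda>n. norm (r ^ n / fact n))"
    using summable_exp[of "\<bar>r\<bar>"] by (simp add: abs_mult power_abs divide_inverse mult.commute)
qed

lemma op_exp_has_sum:
  fixes h :: "'a::banach \<Rightarrow> 'a"
  assumes "bounded_linear h"
  shows "((\<lambda>n. (1 / fact n) *\<^sub>R (h ^^ n) x) has_sum op_exp h x) UNIV"
proof -
  obtain K where K: "K > 0" "\<And>x. norm (h x) \<le> norm x * K"
    using bounded_linear.pos_bounded[OF assms] by blast
  have "summable (\<lambda>n. norm ((1 / fact n) *\<^sub>R (h ^^ n) x))"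
  proof (rule summable_comparison_test)
    have "norm ((1 / fact n) *\<^sub>R (h ^^ n) x) \<le> K ^ n / fact n * norm x" for n
      using funpow_norm_le[of h K n x] K by (simp add: divide_simps mult.commute)
    then show "\<exists>N. \<forall>n\<ge>N. norm (norm ((1 / fact n) *\<^sub>R (h ^^ n) x)) \<le> K ^ n / fact n * norm x"
      by auto
    show "summable (\<lambda>n. K ^ n / fact n * norm x)"
      by (intro summable_mult2 sums_summable[OF has_sum_imp_sums[OF exp_has_sum]])
  qed
  moreover from this have "(\<lambda>n. (1 / fact n) *\<^sub>R (h ^^ n) x) sums op_exp h x"
    unfolding op_exp_def by (rule summable_sums[OF summable_norm_cancel])
  ultimately show ?thesis by (rule norm_summable_imp_has_sum)
qed

lemma op_exp_sums:
  "bounded_linear (h::'a::banach \<Rightarrow> 'a) \<Longrightarrow> (\<lambda>n. (1 / fact n) *\<^sub>R (h ^^ n) x) sums op_exp h x"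
  by (rule has_sum_imp_sums[OF op_exp_has_sum])

lemma op_exp_scaled_has_sum:
  fixes h :: "'a::banach \<Rightarrow> 'a"
  assumes "bounded_linear h"
  shows "((\<lambda>n. (r ^ n / fact n) *\<^sub>R (h ^^ n) x) has_sum op_exp (\<lambda>x. r *\<^sub>R h x) x) UNIV"
  using op_exp_has_sum[OF bounded_linear_compose[OF bounded_linear_scaleR_right assms], of r x]
  by (simp add: funpow_scaleR bounded_linear.linear[OF assms])

lemma op_exp_zero: "op_exp (\<lambda>x. 0) x = x"
proof -
  have "(1 / fact n) *\<^sub>R ((\<lambda>x::'a. 0) ^^ n) x = (if n = 0 then x else 0)" for n
    by (cases n) simp_all
  then show ?thesis
    using sums_single[of 0 "\<lambda>_. x"] unfolding op_exp_def by (simp add: sums_iff)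
qed

lemma sum_power_div_fact_binomial:
  "(\<Sum>i\<le>N. s ^ i / fact i * (t ^ (N - i) / fact (N - i))) = ((s + t) ^ N / fact N :: real)"
proof -
  have "(\<Sum>i\<le>N. s ^ i / fact i * (t ^ (N - i) / fact (N - i)))
      = (\<Sum>i\<le>N. of_nat (N choose i) * s ^ i * t ^ (N - i)) / fact N"
    by (simp add: sum_divide_distrib binomial_fact field_simps)
  then show ?thesis by (simp add: binomial_ring)
qed

lemma exp_product_summable_on:
  assumes "0 \<le> a" "0 \<le> b"
  shows "(\<lambda>(i, j). a ^ i / fact i * (b ^ j / fact j) :: real) summable_on UNIV"
proof -
  have "(\<lambda>(i, j). a ^ i / fact i * (b ^ j / fact j)) summable_on UNIV \<times> UNIV"
  proof (rule summable_on_SigmaI)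
    show "((\<lambda>j. case (i, j) of (i, j) \<Rightarrow> a ^ i / fact i * (b ^ j / fact j))
            has_sum a ^ i / fact i * exp b) UNIV" for i
      using has_sum_cmult_right[OF exp_has_sum, of "a ^ i / fact i" b] by simp
    show "(\<lambda>i. a ^ i / fact i * exp b) summable_on UNIV"
      using has_sum_cmult_left[OF exp_has_sum] unfolding summable_on_def by blast
  qed (use assms in auto)
  then show ?thesis by simp
qed

lemma op_exp_scaleR_add:
  fixes h :: "'a::banach \<Rightarrow> 'a"
  assumes h: "bounded_linear h"
  shows "op_exp (\<lambda>x. s *\<^sub>R h x) (op_exp (\<lambda>x. t *\<^sub>R h x) x) = op_exp (\<lambda>x. (s + t) *\<^sub>R h x) x"
proof -
  define P :: "nat \<times> nat \<Rightarrow> 'a" where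
    "P = (\<lambda>(i, j). (s ^ i / fact i * (t ^ j / fact j)) *\<^sub>R (h ^^ (i + j)) x)"
  \<comment> \<open>Summing the absolutely convergent double series P by rows gives the left-hand side,
    summing it along the diagonals i + j = N gives the right-hand side (binomial theorem).\<close>
  obtain K where K: "K > 0" "\<And>x. norm (h x) \<le> norm x * K"
    using bounded_linear.pos_bounded[OF h] by blast
  have "P abs_summable_on UNIV"
  proof (rule summable_on_comparison_test)
    show "(\<lambda>(i, j). norm x * ((\<bar>s\<bar> * K) ^ i / fact i * ((\<bar>t\<bar> * K) ^ j / fact j))) summable_on UNIV"
      using summable_on_cmult_right[OF exp_product_summable_on, of "\<bar>s\<bar> * K" "\<bar>t\<bar> * K" "norm x"] K
      by (simp add: case_prod_unfold)
    show "norm (P ij) \<le> (\<lambda>(i, j). norm x * ((\<bar>s\<bar> * K) ^ i / fact i * ((\<bar>t\<bar> * K) ^ j / fact j))) ij"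
      for ij
    proof (cases ij)
      case (Pair i j)
      have "norm (P ij) = \<bar>s\<bar> ^ i / fact i * (\<bar>t\<bar> ^ j / fact j) * norm ((h ^^ (i + j)) x)"
        by (simp add: P_def Pair abs_mult power_abs)
      also have "\<dots> \<le> \<bar>s\<bar> ^ i / fact i * (\<bar>t\<bar> ^ j / fact j) * (K ^ (i + j) * norm x)"
        using funpow_norm_le[of h K "i + j" x] K by (intro mult_left_mono) auto
      finally show ?thesis by (simp add: Pair power_add power_mult_distrib field_simps)
    qed
  qed simp
  then obtain S where S: "(P has_sum S) (UNIV \<times> UNIV)"
    using abs_summable_summable by (auto simp: summable_on_def)
  have rows: "((\<lambda>j. P (i, j)) has_sum (s ^ i / fact i) *\<^sub>R (h ^^ i) (op_exp (\<lambda>x. t *\<^sub>R h x) x)) UNIV"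
    for i
  proof -
    have "bounded_linear (\<lambda>y. (s ^ i / fact i) *\<^sub>R (h ^^ i) y)"
      by (rule bounded_linear_compose[OF bounded_linear_scaleR_right bounded_linear_funpow[OF h]])
    from has_sum_bounded_linear[OF this op_exp_scaled_has_sum[OF h]] show ?thesis
      using linear_scale[OF bounded_linear.linear[OF bounded_linear_funpow[OF h, of i]]]
      by (simp add: P_def funpow_add)
  qed
  have "S = op_exp (\<lambda>x. s *\<^sub>R h x) (op_exp (\<lambda>x. t *\<^sub>R h x) x)"
    using has_sum_SigmaD[OF S rows] op_exp_scaled_has_sum[OF h] by (rule has_sum_unique)
  moreover have "S = op_exp (\<lambda>x. (s + t) *\<^sub>R h x) x"
  proof -
    have "(P has_sum S) (UNIV \<times> UNIV) = ((\<lambda>(N, i). P (i, N - i)) has_sum S) (SIGMA N:UNIV. {..N})"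
      by (rule has_sum_reindex_bij_witness[where i = "\<lambda>(N, i). (i, N - i)" and j = "\<lambda>(i, j). (i + j, i)"])
        auto
    with S have diagonal_sums: "((\<lambda>(N, i). P (i, N - i)) has_sum S) (SIGMA N:UNIV. {..N})" by blast
    have diagonal: "((\<lambda>i. P (i, N - i)) has_sum ((s + t) ^ N / fact N) *\<^sub>R (h ^^ N) x) {..N}" for N
    proof -
      have "(\<Sum>i\<le>N. P (i, N - i)) = (\<Sum>i\<le>N. s ^ i / fact i * (t ^ (N - i) / fact (N - i))) *\<^sub>R (h ^^ N) x"
        unfolding scaleR_sum_left by (intro sum.cong) (auto simp: P_def)
      then show ?thesis
        using has_sum_finite[of "{..N}" "\<lambda>i. P (i, N - i)"] sum_power_div_fact_binomial[of s t N]
        by simp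
    qed
    have "((\<lambda>N. ((s + t) ^ N / fact N) *\<^sub>R (h ^^ N) x) has_sum S) UNIV"
      using has_sum_SigmaD[OF diagonal_sums, where g = "\<lambda>N. ((s + t) ^ N / fact N) *\<^sub>R (h ^^ N) x"]
        diagonal by simp
    then show ?thesis using op_exp_scaled_has_sum[OF h] by (rule has_sum_unique)
  qed
  ultimately show ?thesis by simp
qed

lemma op_exp_minus_inverse:
  fixes h :: "'a::banach \<Rightarrow> 'a"
  assumes "bounded_linear h"
  shows "op_exp h (op_exp (\<lambda>x. - h x) x) = x"
  using op_exp_scaleR_add[OF assms, of 1 "-1" x] by (simp add: op_exp_zero)

lemma is_adjoint_funpow:
  assumes "is_adjoint ip h h"
  shows "is_adjoint ip (h ^^ n) (h ^^ n)"
  unfolding is_adjoint_def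
proof (induction n)
  case (Suc n)
  show ?case
  proof (intro allI)
    fix x y
    have "ip ((h ^^ Suc n) x) y = ip ((h ^^ n) x) (h y)"
      using assms by (simp add: is_adjoint_def)
    also have "\<dots> = ip x ((h ^^ Suc n) y)"
      using Suc by (simp add: funpow_swap1)
    finally show "ip ((h ^^ Suc n) x) y = ip x ((h ^^ Suc n) y)" .
  qed
qed simp

lemma cscale_of_real [simp]: "cscale J (complex_of_real r) x = r *\<^sub>R x"
  and cscale_i [simp]: "cscale J \<i> x = J x"
  and cscale_minus_one [simp]: "cscale J (- 1) x = - x"
  by (simp_all add: cscale_def)

lemma bounded_op_add: "bounded_op J T \<Longrightarrow> T (x + y) = T x + T y"
  and bounded_op_diff: "bounded_op J T \<Longrightarrow> T (x - y) = T x - T y"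
  and bounded_op_zero: "bounded_op J T \<Longrightarrow> T 0 = 0"
  and bounded_op_J: "bounded_op J T \<Longrightarrow> T (J x) = J (T x)"
  and bounded_op_bounded_linear: "bounded_op J T \<Longrightarrow> bounded_linear T"
  unfolding bounded_op_def by (simp_all add: linear_add linear_diff linear_0 bounded_linear.linear)

lemma bounded_op_cscale: "bounded_op J T \<Longrightarrow> T (cscale J c x) = cscale J c (T x)"
  unfolding bounded_op_def cscale_def by (simp add: linear_add linear_scale bounded_linear.linear)

lemma is_adjoint_inverse:
  assumes "is_adjoint ip E E" and "\<And>x. E (F x) = x"
  shows "is_adjoint ip F F"
  unfolding is_adjoint_def
proof (intro allI)
  fix x y
  have "ip (F x) y = ip (F x) (E (F y))" by (simp add: assms(2))
  also have "\<dots> = ip x (F y)" using assms unfolding is_adjoint_def by metis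
  finally show "ip (F x) y = ip x (F y)" .
qed

lemma compact_op_compose:
  fixes R F G :: "'a::real_normed_vector \<Rightarrow> 'a"
  assumes R: "compact_op R" and F: "bounded_linear F" and G: "bounded_linear G"
  shows "compact_op (\<lambda>y. F (R (G y)))"
proof -
  have R_lin: "bounded_linear R" and R_compact: "compact (closure (R ` cball 0 1))"
    using R by (simp_all add: compact_op_def)
  obtain K where K: "K > 0" "\<And>x. norm (G x) \<le> norm x * K"
    using bounded_linear.pos_bounded[OF G] by blast
  define Q where "Q = F ` (\<lambda>u. K *\<^sub>R u) ` closure (R ` cball 0 1)"
  have "compact Q"
    unfolding Q_def
    by (intro compact_continuous_image R_compact continuous_intros linear_continuous_on[OF F])
  moreover have "(\<lambda>y. F (R (G y))) ` cball 0 1 \<subseteq> Q"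
  proof (rule image_subsetI)
    fix y :: 'a assume "y \<in> cball 0 1"
    define w where "w = (1 / K) *\<^sub>R G y"
    have "norm w = norm (G y) / K" using K(1) by (simp add: w_def)
    also have "\<dots> \<le> norm y" using K by (simp add: divide_le_eq mult.commute)
    also have "\<dots> \<le> 1" using \<open>y \<in> cball 0 1\<close> by simp
    finally have "norm w \<le> 1" .
    then have "R w \<in> closure (R ` cball 0 1)" by (intro closure_subset[THEN subsetD]) auto
    moreover have "R (G y) = K *\<^sub>R R w"
      using K(1) linear_scale[OF bounded_linear.linear[OF R_lin]] by (simp add: w_def)
    ultimately show "F (R (G y)) \<in> Q" unfolding Q_def by blast
  qed
  ultimately have "closure ((\<lambda>y. F (R (G y))) ` cball 0 1) \<subseteq> Q"
    by (simp add: closure_minimal compact_imp_closed)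
  with \<open>compact Q\<close> have "compact (closure ((\<lambda>y. F (R (G y))) ` cball 0 1))"
    by (metis closed_closure compact_Int_closed inf.absorb2)
  moreover have "bounded_linear (\<lambda>y. F (R (G y)))"
    by (intro bounded_linear_compose[OF F] bounded_linear_compose[OF R_lin G])
  ultimately show ?thesis by (simp add: compact_op_def)
qed

lemma op_algebra_aut_compose:
  assumes f: "op_algebra_aut J A f" and g: "op_algebra_aut J A g"
  shows "op_algebra_aut J A (\<lambda>a. f (g a))"
proof -
  have "g a \<in> A" if "a \<in> A" for a
    using g that unfolding op_algebra_aut_def bij_betw_def by blast
  moreover have "bij_betw (\<lambda>a. f (g a)) A A"
    using bij_betw_trans[of g A A f A] f g unfolding op_algebra_aut_def by (simp add: o_def)
  ultimately show ?thesis
    using f g unfolding op_algebra_aut_def by simp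
qed

lemma op_algebra_aut_conjugation:
  assumes alg: "unital_star_op_algebra J ip A" and "E \<in> A" and "F \<in> A"
    and EF: "\<And>x. E (F x) = x" and FE: "\<And>x. F (E x) = x"
  shows "op_algebra_aut J A (\<lambda>a. E \<circ> a \<circ> F)"
proof -
  have comp: "S \<circ> T \<in> A" if "S \<in> A" "T \<in> A" for S T
    using alg that unfolding unital_star_op_algebra_def by blast
  have E: "bounded_op J E"
    using alg \<open>E \<in> A\<close> unfolding unital_star_op_algebra_def by blast
  have "bij_betw (\<lambda>a. E \<circ> a \<circ> F) A A"
    by (rule bij_betw_byWitness[where f' = "\<lambda>a. F \<circ> a \<circ> E"])
      (auto simp: fun_eq_iff EF FE intro!: comp \<open>E \<in> A\<close> \<open>F \<in> A\<close>)
  then show ?thesis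
    unfolding op_algebra_aut_def by (auto simp: fun_eq_iff EF FE bounded_op_add[OF E] bounded_op_cscale[OF E])
qed

section \<open>Complex Hilbert spaces\<close>

lemma quadratic_bound_imp_zero:
  fixes a W :: real
  assumes "\<And>t. 2 * t * a \<le> t\<^sup>2 * W"
  shows "a = 0"
proof -
  define c where "c = \<bar>W\<bar> + 1"
  have c: "c > 0" by (simp add: c_def)
  have "2 * (a / c) * a \<le> (a / c)\<^sup>2 * \<bar>W\<bar>"
    using assms[of "a / c"] abs_ge_self[of W] by (meson order_trans mult_left_mono zero_le_power2)
  then have "2 * a\<^sup>2 * c \<le> a\<^sup>2 * \<bar>W\<bar>"
    using c by (simp add: field_simps power2_eq_square)
  then have "a\<^sup>2 * (\<bar>W\<bar> + 2) \<le> 0"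
    by (simp add: c_def algebra_simps)
  then show ?thesis
    using abs_ge_zero[of W] by (auto simp: mult_le_0_iff)
qed

locale complex_hilbert_space =
  fixes J :: "'h::banach \<Rightarrow> 'h" and ip :: "'h \<Rightarrow> 'h \<Rightarrow> complex"
  assumes complex_hilbert: "complex_hilbert J ip"
begin

lemma linear_J: "linear J"
  and ip_add_left: "ip (x + y) z = ip x z + ip y z"
  and ip_scaleR_left: "ip (r *\<^sub>R x) y = complex_of_real r * ip x y"
  and ip_J_left: "ip (J x) y = \<i> * ip x y"
  and ip_commute: "ip y x = cnj (ip x y)"
  and ip_self: "ip x x = complex_of_real ((norm x)\<^sup>2)"
  using complex_hilbert unfolding complex_hilbert_def by blast+

lemma J_add: "J (x + y) = J x + J y"
  and J_diff: "J (x - y) = J x - J y"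
  and J_scaleR: "J (r *\<^sub>R x) = r *\<^sub>R J x"
  by (simp_all add: linear_add linear_diff linear_scale linear_J)

lemma ip_add_right: "ip z (x + y) = ip z x + ip z y"
  by (metis ip_commute ip_add_left complex_cnj_add)

lemma ip_scaleR_right: "ip x (r *\<^sub>R y) = complex_of_real r * ip x y"
  by (metis ip_commute ip_scaleR_left complex_cnj_mult complex_cnj_complex_of_real)

lemma ip_J_right: "ip x (J y) = - \<i> * ip x y"
  by (metis ip_commute ip_J_left complex_cnj_mult complex_cnj_i)

lemma ip_zero_left [simp]: "ip 0 y = 0"
  using ip_scaleR_left[of 0 0 y] by simp

lemma ip_zero_right [simp]: "ip y 0 = 0"
  using ip_scaleR_right[of y 0 0] by simp

lemma ip_minus_left: "ip (- x) y = - ip x y"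
  using ip_scaleR_left[of "-1" x y] by simp

lemma ip_minus_right: "ip y (- x) = - ip y x"
  using ip_scaleR_right[of y "-1" x] by simp

lemma ip_diff_left: "ip (x - z) y = ip x y - ip z y"
  using ip_add_left[of x "- z" y] by (simp add: ip_minus_left)

lemma ip_diff_right: "ip y (x - z) = ip y x - ip y z"
  using ip_add_right[of y x "- z"] by (simp add: ip_minus_right)

lemma ip_sum_left: "ip (\<Sum>k\<in>S. f k) y = (\<Sum>k\<in>S. ip (f k) y)"
  by (induction S rule: infinite_finite_induct) (auto simp: ip_add_left)

lemma ip_sum_right: "ip y (\<Sum>k\<in>S. f k) = (\<Sum>k\<in>S. ip y (f k))"
  by (induction S rule: infinite_finite_induct) (auto simp: ip_add_right)

lemma norm_add_square: "(norm (x + y))\<^sup>2 = (norm x)\<^sup>2 + (norm y)\<^sup>2 + 2 * Re (ip x y)"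
proof -
  have "ip (x + y) (x + y) = ip x x + ip y y + (ip x y + ip y x)"
    by (simp add: ip_add_left ip_add_right)
  also have "ip x y + ip y x = complex_of_real (2 * Re (ip x y))"
    by (simp add: ip_commute[of y x] complex_add_cnj)
  finally show ?thesis
    unfolding ip_self by (metis Re_complex_of_real plus_complex.sel(1))
qed

lemma norm_diff_square: "(norm (x - y))\<^sup>2 = (norm x)\<^sup>2 + (norm y)\<^sup>2 - 2 * Re (ip x y)"
  using norm_add_square[of x "- y"] by (simp add: ip_minus_right)

lemma norm_J: "norm (J x) = norm x"
proof -
  have "ip (J x) (J x) = ip x x" by (simp add: ip_J_left ip_J_right)
  then have "(norm (J x))\<^sup>2 = (norm x)\<^sup>2" by (simp only: ip_self of_real_eq_iff)
  then show ?thesis by (simp add: power2_eq_iff_nonneg)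
qed

lemma bounded_linear_J: "bounded_linear J"
  using linear_J norm_J unfolding bounded_linear_def bounded_linear_axioms_def
  by (metis dual_order.refl mult.comm_neutral)

lemma ip_polarization:
  "ip x y = Complex (((norm (x + y))\<^sup>2 - (norm x)\<^sup>2 - (norm y)\<^sup>2) / 2)
                    (((norm (x + J y))\<^sup>2 - (norm x)\<^sup>2 - (norm (J y))\<^sup>2) / 2)"
proof -
  have "Re (ip x y) = ((norm (x + y))\<^sup>2 - (norm x)\<^sup>2 - (norm y)\<^sup>2) / 2"
    using norm_add_square[of x y] by simp
  moreover have "Im (ip x y) = ((norm (x + J y))\<^sup>2 - (norm x)\<^sup>2 - (norm (J y))\<^sup>2) / 2"
    using norm_add_square[of x "J y"] by (simp add: ip_J_right)
  ultimately show ?thesis by (simp add: complex_eq_iff)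
qed

lemma tendsto_ip [tendsto_intros]:
  assumes "(f \<longlongrightarrow> a) F" and "(g \<longlongrightarrow> b) F"
  shows "((\<lambda>n. ip (f n) (g n)) \<longlongrightarrow> ip a b) F"
  unfolding ip_polarization
  by (intro tendsto_Complex tendsto_intros assms bounded_linear.tendsto[OF bounded_linear_J]) simp_all

lemma dense_orthogonal_eq_0:
  assumes "closure S = UNIV" and "\<And>x. x \<in> S \<Longrightarrow> ip x y = 0"
  shows "y = 0"
proof -
  have "closed {x. ip x y = 0}"
    by (intro closed_Collect_eq continuous_intros) (auto simp: continuous_on_def intro: tendsto_ip)
  then have "closure S \<subseteq> {x. ip x y = 0}"
    using assms(2) by (intro closure_minimal) auto
  then have "ip y y = 0" using assms(1) by auto
  then show ?thesis by (simp add: ip_self)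
qed

lemma is_adjoint_op_exp:
  assumes "bounded_linear h" and "is_adjoint ip h h"
  shows "is_adjoint ip (op_exp h) (op_exp h)"
  unfolding is_adjoint_def
proof (intro allI)
  fix x y
  have "ip ((h ^^ n) x) y = ip x ((h ^^ n) y)" for n
    using is_adjoint_funpow[OF assms(2)] unfolding is_adjoint_def by blast
  then have partial_sums: "ip (\<Sum>n<N. (1 / fact n) *\<^sub>R (h ^^ n) x) y = ip x (\<Sum>n<N. (1 / fact n) *\<^sub>R (h ^^ n) y)"
    for N by (simp add: ip_sum_left ip_sum_right ip_scaleR_left ip_scaleR_right)
  have "(\<lambda>N. ip (\<Sum>n<N. (1 / fact n) *\<^sub>R (h ^^ n) x) y) \<longlonglongrightarrow> ip (op_exp h x) y"
    and "(\<lambda>N. ip x (\<Sum>n<N. (1 / fact n) *\<^sub>R (h ^^ n) y)) \<longlonglongrightarrow> ip x (op_exp h y)"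
    using op_exp_sums[OF assms(1)] unfolding sums_def by (auto intro!: tendsto_intros)
  then show "ip (op_exp h x) y = ip x (op_exp h y)"
    unfolding partial_sums by (rule LIMSEQ_unique)
qed

lemma bounded_linear_cscale: "bounded_linear (cscale J c)"
  unfolding cscale_def
  by (intro bounded_linear_add bounded_linear_scaleR_right
      bounded_linear_compose[OF bounded_linear_scaleR_right bounded_linear_J])

lemma parallelogram_law:
  fixes x y :: 'h
  shows "(norm (x + y))\<^sup>2 + (norm (x - y))\<^sup>2 = 2 * (norm x)\<^sup>2 + 2 * (norm y)\<^sup>2"
  using norm_add_square[of x y] norm_diff_square[of x y] by simp

lemma minimizing_sequence_Cauchy:
  fixes M :: "'h set"
  assumes "convex M" and ms: "\<And>n. ms n \<in> M"
    and lim: "(\<lambda>n. norm (z - ms n)) \<longlonglongrightarrow> infdist z M"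
  shows "Cauchy ms"
proof (rule CauchyI)
  fix r :: real assume r: "r > 0"
  define d where "d = infdist z M"
  define a where "a n = (norm (z - ms n))\<^sup>2 - d\<^sup>2" for n
  have "a \<longlonglongrightarrow> d\<^sup>2 - d\<^sup>2"
    unfolding a_def d_def by (intro tendsto_intros lim)
  then obtain N where N: "\<And>n. n \<ge> N \<Longrightarrow> a n < r\<^sup>2 / 4"
    using order_tendstoD(2)[of a 0 sequentially "r\<^sup>2 / 4"] r by (auto simp: eventually_sequentially)
  have bound: "(norm (ms m - ms n))\<^sup>2 \<le> 2 * a m + 2 * a n" for m n
  proof -
    have "(1/2) *\<^sub>R ms m + (1/2) *\<^sub>R ms n \<in> M"
      using convexD[OF assms(1) ms ms] by simp
    from infdist_le[OF this, of z] have "d \<le> norm (z - ((1/2) *\<^sub>R ms m + (1/2) *\<^sub>R ms n))"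
      by (simp add: d_def dist_norm)
    moreover have "(z - ms m) + (z - ms n) = 2 *\<^sub>R (z - ((1/2) *\<^sub>R ms m + (1/2) *\<^sub>R ms n))"
      by (simp add: algebra_simps scaleR_2)
    ultimately have "4 * d\<^sup>2 \<le> (norm ((z - ms m) + (z - ms n)))\<^sup>2"
      using infdist_nonneg[of z M] by (simp add: d_def power_mult_distrib power_mono)
    moreover have "norm ((z - ms m) - (z - ms n)) = norm (ms m - ms n)"
      by (simp add: norm_minus_commute)
    ultimately show ?thesis
      using parallelogram_law[of "z - ms m" "z - ms n"] by (simp add: a_def)
  qed
  show "\<exists>N. \<forall>m\<ge>N. \<forall>n\<ge>N. norm (ms m - ms n) < r"
  proof (intro exI allI impI)
    fix m n assume "N \<le> m" "N \<le> n"
    then have "(norm (ms m - ms n))\<^sup>2 < r\<^sup>2"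
      using bound[of m n] N[of m] N[of n] by linarith
    then show "norm (ms m - ms n) < r"
      using r by (simp add: power_less_imp_less_base)
  qed
qed

lemma nearest_point_exists:
  fixes M :: "'h set"
  assumes "closed M" and "convex M" and "M \<noteq> {}"
  obtains m where "m \<in> M" and "\<And>w. w \<in> M \<Longrightarrow> norm (z - m) \<le> norm (z - w)"
proof -
  define d where "d = infdist z M"
  have "\<exists>m\<in>M. norm (z - m) < d + inverse (real (Suc n))" for n
  proof -
    have "bdd_below ((\<lambda>m. dist z m) ` M)" by (rule bdd_belowI2[of _ 0]) simp
    moreover have "infdist z M < d + inverse (real (Suc n))" by (simp add: d_def)
    ultimately show ?thesis
      using assms(3) by (simp add: infdist_notempty cINF_less_iff dist_norm)
  qed
  then obtain ms where ms: "\<And>n. ms n \<in> M" "\<And>n. norm (z - ms n) < d + inverse (real (Suc n))"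
    by metis
  have lim: "(\<lambda>n. norm (z - ms n)) \<longlonglongrightarrow> d"
  proof (rule tendsto_sandwich[of "\<lambda>_. d" _ _ "\<lambda>n. d + inverse (real (Suc n))"])
    show "\<forall>\<^sub>F n in sequentially. d \<le> norm (z - ms n)"
      using infdist_le[OF ms(1)] by (simp add: d_def dist_norm)
    show "\<forall>\<^sub>F n in sequentially. norm (z - ms n) \<le> d + inverse (real (Suc n))"
      using ms(2) by (simp add: less_imp_le)
    show "(\<lambda>n. d + inverse (real (Suc n))) \<longlonglongrightarrow> d"
      using tendsto_add[OF tendsto_const LIMSEQ_inverse_real_of_nat, of d] by simp
  qed simp
  have "Cauchy ms"
    using assms(2) ms(1) lim unfolding d_def by (rule minimizing_sequence_Cauchy)
  then obtain m where m: "ms \<longlonglongrightarrow> m"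
    using Cauchy_convergent_iff convergent_def by blast
  have "m \<in> M" using closed_sequentially[OF assms(1) ms(1) m] .
  moreover have "norm (z - m) = d"
    using lim by (rule LIMSEQ_unique[rotated]) (intro tendsto_intros m)
  ultimately show thesis
    using that infdist_le[of _ M z] by (auto simp: d_def dist_norm)
qed

lemma nearest_point_orthogonal:
  assumes "subspace M" and J_M: "\<And>w. w \<in> M \<Longrightarrow> J w \<in> M" and "m \<in> M"
    and nearest: "\<And>w. w \<in> M \<Longrightarrow> norm (z - m) \<le> norm (z - w)"
    and "w \<in> M"
  shows "ip w (z - m) = 0"
proof -
  have Re_zero: "Re (ip (z - m) u) = 0" if "u \<in> M" for u
  proof (rule quadratic_bound_imp_zero)
    fix t :: real
    have "m + t *\<^sub>R u \<in> M"
      using assms(1,3) that by (simp add: subspace_add subspace_scale)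
    then have "norm (z - m) \<le> norm ((z - m) - t *\<^sub>R u)"
      using nearest by (simp add: diff_diff_eq)
    then have "(norm (z - m))\<^sup>2 \<le> (norm ((z - m) - t *\<^sub>R u))\<^sup>2"
      by (rule power_mono) simp
    also have "\<dots> = (norm (z - m))\<^sup>2 + t\<^sup>2 * (norm u)\<^sup>2 - 2 * t * Re (ip (z - m) u)"
      by (simp add: norm_diff_square ip_scaleR_right power_mult_distrib)
    finally show "2 * t * Re (ip (z - m) u) \<le> t\<^sup>2 * (norm u)\<^sup>2"
      by simp
  qed
  have "Re (ip (z - m) w) = 0" and "Im (ip (z - m) w) = 0"
    using Re_zero[OF \<open>w \<in> M\<close>] Re_zero[OF J_M[OF \<open>w \<in> M\<close>]] by (simp_all add: ip_J_right)
  then show ?thesis by (simp add: ip_commute[of w] complex_eq_iff)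
qed

theorem orthogonal_projection_exists:
  assumes "closed M" and "subspace M" and "\<And>w. w \<in> M \<Longrightarrow> J w \<in> M"
  obtains m where "m \<in> M" and "\<And>w. w \<in> M \<Longrightarrow> ip w (z - m) = 0"
proof -
  obtain m where "m \<in> M" "\<And>w. w \<in> M \<Longrightarrow> norm (z - m) \<le> norm (z - w)"
    using nearest_point_exists[OF assms(1) subspace_imp_convex[OF assms(2)]] subspace_0[OF assms(2)]
    by blast
  with nearest_point_orthogonal[OF assms(2,3)] show thesis using that by blast
qed

end

section \<open>Selfadjoint operators\<close>

locale selfadjoint_operator = complex_hilbert_space +
  fixes Dom :: "'h::banach set" and D :: "'h \<Rightarrow> 'h"
  assumes selfadjoint: "selfadjoint_op J ip Dom D"
begin

lemma Dom_0: "0 \<in> Dom"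
  and Dom_add: "x \<in> Dom \<Longrightarrow> y \<in> Dom \<Longrightarrow> x + y \<in> Dom"
  and D_add: "x \<in> Dom \<Longrightarrow> y \<in> Dom \<Longrightarrow> D (x + y) = D x + D y"
  and Dom_cscale: "x \<in> Dom \<Longrightarrow> cscale J c x \<in> Dom"
  and D_cscale: "x \<in> Dom \<Longrightarrow> D (cscale J c x) = cscale J c (D x)"
  and dense_Dom: "closure Dom = UNIV"
  and Dom_iff_adjoint_defined: "y \<in> Dom \<longleftrightarrow> (\<exists>z. \<forall>x\<in>Dom. ip (D x) y = ip x z)"
  and D_symmetric: "x \<in> Dom \<Longrightarrow> y \<in> Dom \<Longrightarrow> ip (D x) y = ip x (D y)"
  using selfadjoint unfolding selfadjoint_op_def by blast+

lemma Dom_scaleR: "x \<in> Dom \<Longrightarrow> r *\<^sub>R x \<in> Dom"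
  and D_scaleR: "x \<in> Dom \<Longrightarrow> D (r *\<^sub>R x) = r *\<^sub>R D x"
  and Dom_J: "x \<in> Dom \<Longrightarrow> J x \<in> Dom"
  and D_J: "x \<in> Dom \<Longrightarrow> D (J x) = J (D x)"
  and Dom_minus: "x \<in> Dom \<Longrightarrow> - x \<in> Dom"
  and D_minus: "x \<in> Dom \<Longrightarrow> D (- x) = - D x"
  using Dom_cscale[of x "complex_of_real r"] D_cscale[of x "complex_of_real r"]
    Dom_cscale[of x \<i>] D_cscale[of x \<i>] Dom_cscale[of x "- 1"] D_cscale[of x "- 1"]
  by simp_all

lemma Dom_diff: "x \<in> Dom \<Longrightarrow> y \<in> Dom \<Longrightarrow> x - y \<in> Dom"
  and D_diff: "x \<in> Dom \<Longrightarrow> y \<in> Dom \<Longrightarrow> D (x - y) = D x - D y"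
  using Dom_add[of x "- y"] D_add[of x "- y"] Dom_minus[of y] D_minus[of y] by simp_all

lemma D_0: "D 0 = 0"
  using D_add[OF Dom_0 Dom_0] by simp

lemma Im_ip_D_self:
  assumes "x \<in> Dom"
  shows "Im (ip (D x) x) = 0"
proof -
  have "ip (D x) x = cnj (ip (D x) x)"
    using D_symmetric[OF assms assms] ip_commute[of x "D x"] by simp
  then show ?thesis by (simp add: complex_eq_iff)
qed

lemma norm_D_minus_J_square: "x \<in> Dom \<Longrightarrow> (norm (D x - J x))\<^sup>2 = (norm (D x))\<^sup>2 + (norm x)\<^sup>2"
  using Im_ip_D_self[of x] by (simp add: norm_diff_square norm_J ip_J_right)

lemma norm_le_norm_D_minus_J:
  assumes "x \<in> Dom"
  shows "norm x \<le> norm (D x - J x)"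
  using norm_D_minus_J_square[OF assms] by (intro power2_le_imp_le[of "norm x"]) simp_all

lemma graph_closed:
  assumes "\<And>n. x n \<in> Dom" and "x \<longlonglongrightarrow> a" and "(\<lambda>n. D (x n)) \<longlonglongrightarrow> b"
  shows "a \<in> Dom" and "D a = b"
proof -
  have limit: "ip (D v) a = ip v b" if "v \<in> Dom" for v
  proof (rule LIMSEQ_unique)
    show "(\<lambda>n. ip (D v) (x n)) \<longlonglongrightarrow> ip (D v) a" by (intro tendsto_intros assms)
    show "(\<lambda>n. ip (D v) (x n)) \<longlonglongrightarrow> ip v b"
      unfolding D_symmetric[OF that assms(1)] by (intro tendsto_intros assms)
  qed
  then show a: "a \<in> Dom" using Dom_iff_adjoint_defined by blast
  have "D a - b = 0"
  proof (rule dense_orthogonal_eq_0[OF dense_Dom])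
    fix v assume "v \<in> Dom"
    show "ip v (D a - b) = 0"
      using limit[OF \<open>v \<in> Dom\<close>] D_symmetric[OF \<open>v \<in> Dom\<close> a] by (simp add: ip_diff_right)
  qed
  then show "D a = b" by simp
qed

lemma closed_range_D_minus_J: "closed ((\<lambda>x. D x - J x) ` Dom)"
  unfolding closed_sequential_limits
proof (intro allI impI, elim conjE)
  fix y l assume "\<forall>n. y n \<in> (\<lambda>x. D x - J x) ` Dom" and y: "y \<longlonglongrightarrow> l"
  then have "\<forall>n. \<exists>u\<in>Dom. y n = D u - J u" by blast
  then obtain x where x: "\<And>n. x n \<in> Dom" "\<And>n. y n = D (x n) - J (x n)" by metis
  have "Cauchy x"
  proof (rule CauchyI)
    fix r :: real assume "r > 0"
    then obtain N where N: "\<forall>m\<ge>N. \<forall>n\<ge>N. norm (y m - y n) < r"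
      using CauchyD[OF LIMSEQ_imp_Cauchy[OF y]] by blast
    have "norm (x m - x n) \<le> norm (y m - y n)" for m n
    proof -
      have "y m - y n = D (x m - x n) - J (x m - x n)"
        by (simp add: x(2) D_diff[OF x(1) x(1)] J_diff)
      then show ?thesis using norm_le_norm_D_minus_J[OF Dom_diff[OF x(1) x(1)]] by simp
    qed
    with N show "\<exists>N. \<forall>m\<ge>N. \<forall>n\<ge>N. norm (x m - x n) < r"
      by (blast intro: le_less_trans)
  qed
  then obtain a where a: "x \<longlonglongrightarrow> a" using Cauchy_convergent_iff convergent_def by blast
  have "(\<lambda>n. D (x n)) \<longlonglongrightarrow> l + J a"
    using tendsto_add[OF y bounded_linear.tendsto[OF bounded_linear_J a]] by (simp add: x(2))
  from graph_closed[OF x(1) a this] show "l \<in> (\<lambda>x. D x - J x) ` Dom"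
    by (intro image_eqI[where x = a]) simp_all
qed

lemma subspace_range_D_minus_J: "subspace ((\<lambda>x. D x - J x) ` Dom)"
proof (rule subspaceI)
  show "0 \<in> (\<lambda>x. D x - J x) ` Dom"
    by (intro image_eqI[where x = 0]) (simp_all add: Dom_0 D_0 linear_0[OF linear_J])
  fix u v assume "u \<in> (\<lambda>x. D x - J x) ` Dom" "v \<in> (\<lambda>x. D x - J x) ` Dom"
  then obtain x x' where "x \<in> Dom" "x' \<in> Dom" "u = D x - J x" "v = D x' - J x'" by blast
  then show "u + v \<in> (\<lambda>x. D x - J x) ` Dom"
    by (intro image_eqI[where x = "x + x'"]) (simp_all add: Dom_add D_add J_add)
next
  fix c u assume "u \<in> (\<lambda>x. D x - J x) ` Dom"
  then obtain x where "x \<in> Dom" "u = D x - J x" by blast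
  then show "c *\<^sub>R u \<in> (\<lambda>x. D x - J x) ` Dom"
    by (intro image_eqI[where x = "c *\<^sub>R x"]) (simp_all add: Dom_scaleR D_scaleR J_scaleR scaleR_right_diff_distrib)
qed

lemma surj_D_minus_J: "\<exists>x\<in>Dom. D x - J x = z"
proof -
  let ?M = "(\<lambda>x. D x - J x) ` Dom"
  have "J u \<in> ?M" if "u \<in> ?M" for u
  proof -
    obtain x where "x \<in> Dom" "u = D x - J x" using \<open>u \<in> ?M\<close> by blast
    then show ?thesis by (intro image_eqI[where x = "J x"]) (simp_all add: Dom_J D_J J_diff)
  qed
  then obtain m where m: "m \<in> ?M" and orth: "\<And>w. w \<in> ?M \<Longrightarrow> ip w (z - m) = 0"
    using orthogonal_projection_exists[OF closed_range_D_minus_J subspace_range_D_minus_J] by blast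
  \<comment> \<open>The component v of z orthogonal to the range satisfies D v = - J v, forcing v = 0.\<close>
  define v where "v = z - m"
  have Dv: "ip (D u) v = ip u (- J v)" if "u \<in> Dom" for u
    using orth[of "D u - J u"] that by (simp add: v_def ip_diff_left ip_J_left ip_minus_right ip_J_right)
  then have v: "v \<in> Dom" using Dom_iff_adjoint_defined by blast
  have "D v - (- J v) = 0"
  proof (rule dense_orthogonal_eq_0[OF dense_Dom])
    fix u assume "u \<in> Dom"
    show "ip u (D v - - J v) = 0"
      using Dv[OF \<open>u \<in> Dom\<close>] D_symmetric[OF \<open>u \<in> Dom\<close> v]
      by (simp add: ip_add_right ip_minus_right)
  qed
  then have "Im (ip (D v) v) = - (norm v)\<^sup>2"
    by (simp add: ip_minus_left ip_J_left ip_self eq_neg_iff_add_eq_0[symmetric])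
  then have "v = 0" using Im_ip_D_self[OF v] by simp
  with m show ?thesis by (auto simp: v_def)
qed

lemma resolvent_at_i:
  obtains R where "bounded_linear R" and "\<And>y. R y \<in> Dom" and "\<And>y. D (R y) - J (R y) = y"
    and "\<And>x. x \<in> Dom \<Longrightarrow> R (D x - J x) = x"
proof -
  obtain R where R: "\<And>y. R y \<in> Dom" "\<And>y. D (R y) - J (R y) = y"
    using surj_D_minus_J by metis
  have injective: "x = x'" if "x \<in> Dom" "x' \<in> Dom" "D x - J x = D x' - J x'" for x x'
    using norm_le_norm_D_minus_J[OF Dom_diff[OF that(1,2)]] that(3)
    by (simp add: D_diff[OF that(1,2)] J_diff algebra_simps)
  have left_inverse: "R (D x - J x) = x" if "x \<in> Dom" for x
    using injective[OF R(1) that] R(2) by blast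
  have "bounded_linear R"
  proof (rule bounded_linear_intro[where K = 1])
    show "R (y + y') = R y + R y'" for y y'
    proof -
      have "D (R y + R y') - J (R y + R y') = y + y'"
        using R(2)[of y] R(2)[of y'] by (simp add: D_add[OF R(1) R(1)] J_add algebra_simps)
      then show ?thesis using left_inverse[OF Dom_add[OF R(1)[of y] R(1)[of y']]] by simp
    qed
    show "R (r *\<^sub>R y) = r *\<^sub>R R y" for r y
    proof -
      have "D (r *\<^sub>R R y) - J (r *\<^sub>R R y) = r *\<^sub>R y"
        using R(2)[of y] by (simp add: D_scaleR[OF R(1)] J_scaleR algebra_simps)
      then show ?thesis using left_inverse[OF Dom_scaleR[OF R(1)[of y]], of r] by simp
    qed
    show "norm (R y) \<le> norm y * 1" for y
      using norm_le_norm_D_minus_J[OF R(1)] R(2) by simp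
  qed
  with R left_inverse show thesis using that by blast
qed

end

section \<open>Conjugation of a twisted spectral triple\<close>

context complex_hilbert_space
begin

lemma selfadjoint_op_congruence:
  assumes "selfadjoint_op J ip Dom D"
    and E: "bounded_op J E" "is_adjoint ip E E" and F: "bounded_linear F"
    and EF: "\<And>x. E (F x) = x" and FE: "\<And>x. F (E x) = x"
  shows "selfadjoint_op J ip {x. E x \<in> Dom} (E \<circ> D \<circ> E)"
proof -
  interpret selfadjoint_operator J ip Dom D by unfold_locales fact
  have E_adj: "ip (E x) y = ip x (E y)" and F_adj: "ip (F x) y = ip x (F y)" for x y
    using E(2) is_adjoint_inverse[OF E(2) EF] unfolding is_adjoint_def by blast+
  have "{x. E x \<in> Dom} = F ` Dom"
    by (auto simp: EF image_iff) (metis FE)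
  moreover have "F ` closure Dom \<subseteq> closure (F ` Dom)"
    by (intro image_closure_subset linear_continuous_on[OF F] closure_subset) simp
  moreover have "F ` UNIV = UNIV" by (metis FE surjI)
  ultimately have dense: "closure {x. E x \<in> Dom} = UNIV"
    using dense_Dom by auto
  have adjoint_domain: "(\<exists>z. \<forall>x\<in>{x. E x \<in> Dom}. ip (E (D (E x))) y = ip x z) \<longleftrightarrow> E y \<in> Dom" for y
  proof
    assume "E y \<in> Dom"
    then obtain z where "\<forall>u\<in>Dom. ip (D u) (E y) = ip u z" using Dom_iff_adjoint_defined by blast
    then show "\<exists>z. \<forall>x\<in>{x. E x \<in> Dom}. ip (E (D (E x))) y = ip x z"
      by (auto simp: E_adj[symmetric] intro!: exI[of _ "E z"])
  next
    assume "\<exists>z. \<forall>x\<in>{x. E x \<in> Dom}. ip (E (D (E x))) y = ip x z"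
    then obtain z where z: "\<forall>x\<in>{x. E x \<in> Dom}. ip (E (D (E x))) y = ip x z" by blast
    have "ip (D u) (E y) = ip u (F z)" if "u \<in> Dom" for u
      using z[rule_format, of "F u"] that by (simp add: EF E_adj F_adj)
    then show "E y \<in> Dom" using Dom_iff_adjoint_defined by blast
  qed
  show ?thesis
    unfolding selfadjoint_op_def
    using Dom_0 Dom_add D_add Dom_cscale D_cscale D_symmetric dense adjoint_domain
    by (simp add: bounded_op_zero[OF E(1)] bounded_op_add[OF E(1)] bounded_op_cscale[OF E(1)] E_adj)
qed

lemma compact_resolvent_congruence:
  assumes D: "selfadjoint_op J ip Dom D" "compact_resolvent J Dom D"
    and E: "bounded_op J E" "is_adjoint ip E E" and F: "bounded_op J F"
    and EF: "\<And>x. E (F x) = x" and FE: "\<And>x. F (E x) = x"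
  shows "compact_resolvent J {x. E x \<in> Dom} (E \<circ> D \<circ> E)"
proof -
  obtain \<mu> R0 where R0: "\<And>x. x \<in> Dom \<Longrightarrow> R0 (D x - cscale J \<mu> x) = x" "compact_op R0"
    using D(2) unfolding compact_resolvent_def by blast
  interpret D': selfadjoint_operator J ip "{x. E x \<in> Dom}" "E \<circ> D \<circ> E"
    by unfold_locales
      (rule selfadjoint_op_congruence[OF D(1) E bounded_op_bounded_linear[OF F] EF FE])
  obtain R where R: "bounded_linear R" "\<And>y. E (R y) \<in> Dom" "\<And>y. E (D (E (R y))) - J (R y) = y"
    and R_left: "\<And>x. E x \<in> Dom \<Longrightarrow> R (E (D (E x)) - J x) = x"
    using D'.resolvent_at_i by auto
  \<comment> \<open>Applying F to (D' - i) R y = y shows that (D - \<mu>) E R y = G y with G bounded.\<close>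
  define G where "G y = F y + J (F (R y)) - cscale J \<mu> (E (R y))" for y
  have "R = (\<lambda>y. F (R0 (G y)))"
  proof (rule ext)
    fix y
    have "D (E (R y)) = F y + J (F (R y))"
      using arg_cong[OF R(3), of F] by (simp add: FE bounded_op_diff[OF F] bounded_op_J[OF F] algebra_simps)
    then show "R y = F (R0 (G y))" using R0(1)[OF R(2)[of y]] by (simp add: G_def FE)
  qed
  moreover have "bounded_linear G"
    unfolding G_def using bounded_op_bounded_linear[OF E(1)] bounded_op_bounded_linear[OF F] R(1)
    by (intro bounded_linear_sub bounded_linear_add bounded_linear_compose[OF bounded_linear_J]
        bounded_linear_compose[OF bounded_linear_cscale] bounded_linear_compose[of F R]
        bounded_linear_compose[of E R]) auto
  ultimately have "compact_op R"
    using compact_op_compose[OF R0(2) bounded_op_bounded_linear[OF F]] by simp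
  then show ?thesis
    unfolding compact_resolvent_def using R R_left
    by (intro exI[of _ \<i>] exI[of _ R]) simp
qed

end

lemma sigma_spectral_triple_congruence:
  assumes triple: "sigma_spectral_triple J ip A \<sigma> Dom D"
    and "E \<in> A" and "F \<in> A" and E_adj: "is_adjoint ip E E"
    and EF: "\<And>x. E (F x) = x" and FE: "\<And>x. F (E x) = x"
  shows "sigma_spectral_triple J ip A (\<lambda>a. E \<circ> \<sigma> (E \<circ> a \<circ> F) \<circ> F) {x. E x \<in> Dom} (E \<circ> D \<circ> E)"
proof -
  have hilbert: "complex_hilbert J ip" and alg: "unital_star_op_algebra J ip A"
    and aut: "op_algebra_aut J A \<sigma>" and D: "selfadjoint_op J ip Dom D" "compact_resolvent J Dom D"
    and commutator: "\<And>a. a \<in> A \<Longrightarrow> (\<forall>x\<in>Dom. a x \<in> Dom) \<and>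
        (\<exists>B. bounded_linear B \<and> (\<forall>x\<in>Dom. D (a x) - \<sigma> a (D x) = B x))"
    using triple unfolding sigma_spectral_triple_def by blast+
  interpret complex_hilbert_space J ip by unfold_locales fact
  have E: "bounded_op J E" and F: "bounded_op J F"
    using alg \<open>E \<in> A\<close> \<open>F \<in> A\<close> unfolding unital_star_op_algebra_def by blast+
  have conj: "op_algebra_aut J A (\<lambda>a. E \<circ> a \<circ> F)"
    using alg \<open>E \<in> A\<close> \<open>F \<in> A\<close> EF FE by (rule op_algebra_aut_conjugation)
  have "(\<forall>x\<in>{x. E x \<in> Dom}. a x \<in> {x. E x \<in> Dom}) \<and>
      (\<exists>B. bounded_linear B \<and> (\<forall>x\<in>{x. E x \<in> Dom}.
         (E \<circ> D \<circ> E) (a x) - (E \<circ> \<sigma> (E \<circ> a \<circ> F) \<circ> F) ((E \<circ> D \<circ> E) x) = B x))"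
    if "a \<in> A" for a
  proof -
    have "E \<circ> a \<circ> F \<in> A"
      using conj \<open>a \<in> A\<close> unfolding op_algebra_aut_def bij_betw_def by blast
    then obtain B where "\<forall>x\<in>Dom. E (a (F x)) \<in> Dom" "bounded_linear B"
      "\<forall>x\<in>Dom. D (E (a (F x))) - \<sigma> (E \<circ> a \<circ> F) (D x) = B x"
      using commutator by fastforce
    moreover have "bounded_linear (\<lambda>x. E (B (E x)))"
      using bounded_op_bounded_linear[OF E] \<open>bounded_linear B\<close> by (auto intro: bounded_linear_compose)
    ultimately show ?thesis
      by (intro conjI exI[of _ "\<lambda>x. E (B (E x))"]) (auto simp: FE bounded_op_diff[OF E, symmetric])
  qed
  then show ?thesis
    unfolding sigma_spectral_triple_def
    using hilbert alg op_algebra_aut_compose[OF conj op_algebra_aut_compose[OF aut conj]]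
      selfadjoint_op_congruence[OF D(1) E E_adj bounded_op_bounded_linear[OF F] EF FE]
      compact_resolvent_congruence[OF D E E_adj F EF FE]
    by simp
qed

theorem lemma3p2:
  fixes J :: "'h::banach \<Rightarrow> 'h" and ip :: "'h \<Rightarrow> 'h \<Rightarrow> complex"
    and A :: "('h \<Rightarrow> 'h) set" and \<sigma> :: "('h \<Rightarrow> 'h) \<Rightarrow> ('h \<Rightarrow> 'h)"
    and Dom :: "'h set" and D :: "'h \<Rightarrow> 'h" and h :: "'h \<Rightarrow> 'h"
  assumes "complex_hilbert J ip"
    and "unital_star_op_algebra J ip A"
    and "op_algebra_aut J A \<sigma>"
    and "sigma_spectral_triple J ip A \<sigma> Dom D"
    and "h \<in> A" and "is_adjoint ip h h"
    and "op_exp h \<in> A" and "op_exp (\<lambda>x. - h x) \<in> A"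
  shows "op_algebra_aut J A
           (\<lambda>a. op_exp h \<circ> \<sigma> (op_exp h \<circ> a \<circ> op_exp (\<lambda>x. - h x)) \<circ> op_exp (\<lambda>x. - h x))
       \<and> sigma_spectral_triple J ip A
           (\<lambda>a. op_exp h \<circ> \<sigma> (op_exp h \<circ> a \<circ> op_exp (\<lambda>x. - h x)) \<circ> op_exp (\<lambda>x. - h x))
           {x. op_exp h x \<in> Dom} (op_exp h \<circ> D \<circ> op_exp h)"
proof -
  have h: "bounded_linear h"
    using assms(2,5) unfolding unital_star_op_algebra_def bounded_op_def by blast
  have "op_exp h (op_exp (\<lambda>x. - h x) x) = x" and "op_exp (\<lambda>x. - h x) (op_exp h x) = x" for x
    using op_exp_minus_inverse[OF h] op_exp_minus_inverse[OF bounded_linear_minus[OF h]] by simp_all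
  moreover have "is_adjoint ip (op_exp h) (op_exp h)"
    using complex_hilbert_space.is_adjoint_op_exp[OF _ h assms(6)] assms(1)
    by (simp add: complex_hilbert_space_def)
  ultimately have "sigma_spectral_triple J ip A
      (\<lambda>a. op_exp h \<circ> \<sigma> (op_exp h \<circ> a \<circ> op_exp (\<lambda>x. - h x)) \<circ> op_exp (\<lambda>x. - h x))
      {x. op_exp h x \<in> Dom} (op_exp h \<circ> D \<circ> op_exp h)"
    using sigma_spectral_triple_congruence[OF assms(4,7,8)] by blast
  then show ?thesis unfolding sigma_spectral_triple_def by blast
qed

end
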